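(* (i) Let $n\ge1$, $q>0$, and let $f,g:\mathbb{R}\to\mathbb{R}$ be continuous nondecreasing with $f$ positive. If $\varphi\in C^2([0,R))$ is a solution of $$\varphi''+\frac{n-1}{r}\varphi'=f(\varphi)+g(\varphi)|\varphi'|^q,\qquad\varphi(0)=a,\qquad\varphi'(0)=0,$$ then $\Phi(x)=\varphi(|x|)$ belongs to $C^2(B_R)$ and is a classical solution of $\mathcal{M}^+_{0,1}(D^2\Phi)=f(\Phi)+g(\Phi)|D\Phi|^q$ in the ball $B_R\subset\mathbb{R}^n$ centered at the origin. (ii) Let $1\le k\le n$, $q>0$, and let $f,g:\mathbb{R}\to\mathbb{R}$ be continuous nondecreasing with $f$ positive and $g$ nonnegative. If $\varphi\in C^2([0,R))$ is a solution of $$\varphi''+\frac{k-1}{r}\varphi'=f(\varphi)+g(\varphi)|\varphi'|^q,\qquad\varphi(0)=a,\qquad\varphi'(0)=0,$$ then $\Phi(x)=\varphi(|x|)$ belongs to $C^2(B_R)$ and is a classical solution of $\mathcal{P}^+_k(D^2\Phi)=f(\Phi)+g(\Phi)|D\Phi|^q$ in $B_R$.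
   Context: A solution on $[0,R)$ of the Cauchy problem is a function $\varphi$ satisfying the ODE on $(0,R)$, $\varphi(0)=a$, $\lim_{r\to0^+}\varphi'(r)=0=\varphi'(0)$, with $\lim_{r\to0^+}\varphi''(r)$ existing in $\mathbb{R}$. For a real symmetric $n\times n$ matrix $X$ with ordered eigenvalues $\mu_1(X)\le\dots\le\mu_n(X)$: $\mathcal{M}^+_{0,1}(X)=\sum_{\mu_i(X)>0}\mu_i(X)$ and $\mathcal{P}^+_k(X)=\mu_{n-k+1}(X)+\dots+\mu_n(X)$. *)

theory Defs
  imports "HOL-Analysis.Analysis" "HOL-Computational_Algebra.Polynomial" "HOL-Library.Multiset"
begin

definition charpoly :: "real^'n^'n \<Rightarrow> real poly" where
  "charpoly X = det (\<chi> i j. (if i = j then [:0, 1:] else 0) - [: X $ i $ j :])"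

text \<open>Eigenvalues (with multiplicity) listed in nondecreasing order
  mu_1 <= ... <= mu_n (for a real symmetric matrix all n of them are real).\<close>
definition ordered_eigenvalues :: "real^'n^'n \<Rightarrow> real list" where
  "ordered_eigenvalues X = sorted_list_of_multiset (proots (charpoly X))"

definition pucci_M01_plus :: "real^'n^'n \<Rightarrow> real" where
  "pucci_M01_plus X = sum_list (filter (\<lambda>\<mu>. \<mu> > 0) (ordered_eigenvalues X))"

definition pucci_P_plus :: "nat \<Rightarrow> real^'n^'n \<Rightarrow> real" where
  "pucci_P_plus k X = sum_list (drop (CARD('n) - k) (ordered_eigenvalues X))"

definition C2_on_interval :: "real \<Rightarrow> (real \<Rightarrow> real) \<Rightarrow> (real \<Rightarrow> real) \<Rightarrow> (real \<Rightarrow> real) \<Rightarrow> bool" where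
  "C2_on_interval R \<phi> \<phi>1 \<phi>2 \<longleftrightarrow>
     (\<forall>r\<in>{0..<R}. (\<phi> has_real_derivative \<phi>1 r) (at r within {0..<R})) \<and>
     (\<forall>r\<in>{0..<R}. (\<phi>1 has_real_derivative \<phi>2 r) (at r within {0..<R})) \<and>
     continuous_on {0..<R} \<phi>2"

text \<open>phi (with derivatives phi1, phi2) is a solution on [0,R) of the Cauchy problem
  phi'' + (m-1)/r phi' = f(phi) + g(phi) |phi'|^q, phi(0) = a, phi'(0) = 0.
  The limit conditions at 0 of the context follow from C^2 on [0,R).\<close>
definition radial_cauchy_solution ::
  "real \<Rightarrow> (real \<Rightarrow> real) \<Rightarrow> (real \<Rightarrow> real) \<Rightarrow> real \<Rightarrow> real \<Rightarrow> real
    \<Rightarrow> (real \<Rightarrow> real) \<Rightarrow> (real \<Rightarrow> real) \<Rightarrow> (real \<Rightarrow> real) \<Rightarrow> bool" where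
  "radial_cauchy_solution m f g q a R \<phi> \<phi>1 \<phi>2 \<longleftrightarrow>
     \<phi> 0 = a \<and> \<phi>1 0 = 0 \<and>
     (\<forall>r\<in>{0<..<R}. \<phi>2 r + (m - 1) / r * \<phi>1 r = f (\<phi> r) + g (\<phi> r) * \<bar>\<phi>1 r\<bar> powr q)"

definition C2_on :: "(real^('n::finite)) set \<Rightarrow> (real^'n \<Rightarrow> real) \<Rightarrow> (real^'n \<Rightarrow> real^'n)
    \<Rightarrow> (real^'n \<Rightarrow> real^'n^'n) \<Rightarrow> bool" where
  "C2_on S u Du Hu \<longleftrightarrow>
     (\<forall>x\<in>S. (u has_derivative (\<lambda>h. Du x \<bullet> h)) (at x)) \<and>
     (\<forall>x\<in>S. (Du has_derivative (\<lambda>h. Hu x *v h)) (at x)) \<and>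
     continuous_on S Hu"

end

theory Submission
  imports Defs
begin

text \<open>
  For \<open>\<Phi>(x) = \<phi>(|x|)\<close> the Hessian is \<open>\<psi>(r) I + (\<phi>''(r) - \<psi>(r)) x x\<^sup>T / r\<^sup>2\<close> with
  \<open>\<psi>(r) = \<phi>'(r)/r\<close> (and \<open>\<psi>(0) = \<phi>''(0)\<close>), whose eigenvalues are \<open>\<phi>''(r)\<close> once and \<open>\<psi>(r)\<close>
  \<open>n - 1\<close> times. Both Pucci-type operators therefore evaluate to \<open>\<phi>'' + (m - 1) \<psi>\<close>, which is the
  left-hand side of the ODE, as soon as the eigenvalues are suitably placed: for \<open>M\<^sup>+\<close> both
  must be nonnegative, for \<open>P\<^sup>+\<^sub>k\<close> the eigenvalue \<open>\<phi>''\<close> must be the largest.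

  Letting \<open>r \<rightarrow> 0\<close> in the ODE gives \<open>m \<phi>''(0) = f(a) > 0\<close>. At a first zero of \<open>\<phi>'\<close> the ODE
  would force \<open>\<phi>'' > 0\<close>, so \<open>\<phi>' > 0\<close> on \<open>(0, R)\<close> and \<open>\<phi>\<close> increases. At a last zero \<open>r0\<close> of
  \<open>\<phi>''\<close> before a point where \<open>\<phi>'' < 0\<close>, monotonicity of \<open>f\<close> and \<open>g\<close> compares the ODE at
  \<open>r\<close> and \<open>r0\<close> and yields a contradiction, so \<open>\<phi>'' \<ge> 0\<close>. Finally, if \<open>g \<ge> 0\<close> the
  right-hand side \<open>h\<close> of the ODE is nondecreasing, and integrating
  \<open>(r^(k-1) \<phi>')' = r^(k-1) h\<close> gives \<open>k \<phi>'(r)/r \<le> h(r) = \<phi>''(r) + (k - 1) \<phi>'(r)/r\<close>, i.e. \<open>\<psi> \<le> \<phi>''\<close>.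
\<close>

section \<open>Spectrum of \<open>\<alpha> I + \<beta> x x\<^sup>T\<close>\<close>

definition outer_prod :: "real^'n \<Rightarrow> real^'n^'n" where
  "outer_prod x = (\<chi> i j. x$i * x$j)"

lemma mat_plus_outer_prod_mult:
  "(mat \<alpha> + \<beta> *\<^sub>R outer_prod x) *v h = \<alpha> *\<^sub>R h + (\<beta> * (x \<bullet> h)) *\<^sub>R x"
  by (simp add: vec_eq_iff matrix_vector_mult_def mat_def outer_prod_def inner_vec_def
      sum.distrib sum_distrib_left algebra_simps if_distrib[of "\<lambda>u. u * _"] cong: if_cong)
     (simp add: if_distrib[of "\<lambda>u. _ * u"] cong: if_cong)

lemma orthogonal_conj_mat_plus_outer_prod:
  fixes f :: "real^'n \<Rightarrow> real^'n"
  assumes "orthogonal_transformation f"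
  shows "transpose (matrix f) ** (mat \<alpha> + \<beta> *\<^sub>R outer_prod (f x)) ** matrix f
       = mat \<alpha> + \<beta> *\<^sub>R outer_prod x"
proof -
  have lin: "linear f" and inner: "\<And>v w. f v \<bullet> f w = v \<bullet> w"
    using assms by (auto simp: orthogonal_transformation_def)
  have mf: "matrix f *v v = f v" for v
    using fun_cong[OF matrix_vector_mul(2)[OF lin], of v] by simp
  have "transpose (matrix f) ** matrix f = mat 1"
    using assms orthogonal_matrix orthogonal_transformation_matrix by blast
  then have inv: "transpose (matrix f) *v f v = v" for v
    using matrix_vector_mul_assoc[of "transpose (matrix f)" "matrix f" v] by (simp add: mf)
  have "(transpose (matrix f) ** (mat \<alpha> + \<beta> *\<^sub>R outer_prod (f x)) ** matrix f) *v v
      = (mat \<alpha> + \<beta> *\<^sub>R outer_prod x) *v v" for v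
    by (simp only: matrix_vector_mul_assoc[symmetric] mf mat_plus_outer_prod_mult
        inner matrix_vector_right_distrib matrix_vector_mult_scaleR inv)
  then show ?thesis
    by (simp add: matrix_eq)
qed

lemma det_mat_plus_outer_prod:
  fixes x :: "real^'n"
  shows "det (mat \<alpha> + \<beta> *\<^sub>R outer_prod x) = (\<alpha> + \<beta> * (x \<bullet> x)) * \<alpha> ^ (CARD('n) - 1)"
proof -
  fix k :: 'n
  txt \<open>A rotation taking \<open>x\<close> to \<open>|x| e\<^sub>k\<close> conjugates the matrix into a diagonal one.\<close>
  obtain f :: "real^'n \<Rightarrow> real^'n" where f: "orthogonal_transformation f" "f x = norm x *\<^sub>R axis k 1"
    using orthogonal_transformation_exists[of x "norm x *\<^sub>R axis k (1::real)"] by auto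
  have "orthogonal_matrix (matrix f)"
    using f(1) orthogonal_transformation_matrix by blast
  then have det_f: "det (matrix f) * det (matrix f) = 1"
    using det_orthogonal_matrix by (metis mult_1 mult_minus1 minus_minus)
  have "det (mat \<alpha> + \<beta> *\<^sub>R outer_prod x)
      = det (transpose (matrix f)) * det (mat \<alpha> + \<beta> *\<^sub>R outer_prod (f x)) * det (matrix f)"
    unfolding orthogonal_conj_mat_plus_outer_prod[OF f(1), of \<alpha> \<beta> x, symmetric] det_mul ..
  also have "\<dots> = det (mat \<alpha> + \<beta> *\<^sub>R outer_prod (f x))"
    using det_f by (simp add: det_transpose)
  also have "\<dots> = (\<Prod>i\<in>UNIV. if i = k then \<alpha> + \<beta> * (x \<bullet> x) else \<alpha>)"
    by (subst det_diagonal)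
      (auto simp: f(2) outer_prod_def mat_def axis_def power2_norm_eq_inner[symmetric]
        power2_eq_square intro!: prod.cong)
  also have "\<dots> = (\<alpha> + \<beta> * (x \<bullet> x)) * \<alpha> ^ (CARD('n) - 1)"
    by (subst prod.remove[of UNIV k]) (auto simp: card_Diff_singleton)
  finally show ?thesis .
qed

lemma poly_charpoly: "poly (charpoly X) t = det (mat t - X)"
  unfolding charpoly_def det_def
  by (auto simp: poly_sum poly_prod mat_def of_int_poly intro!: sum.cong prod.cong)

lemma charpoly_mat_plus_outer_prod:
  fixes x :: "real^'n"
  shows "charpoly (mat \<alpha> + \<beta> *\<^sub>R outer_prod x)
       = [:-(\<alpha> + \<beta> * (x \<bullet> x)), 1:] * [:-\<alpha>, 1:] ^ (CARD('n) - 1)"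
proof -
  have "poly (charpoly (mat \<alpha> + \<beta> *\<^sub>R outer_prod x)) t
      = poly ([:-(\<alpha> + \<beta> * (x \<bullet> x)), 1:] * [:-\<alpha>, 1:] ^ (CARD('n) - 1)) t" for t
  proof -
    have "mat t - (mat \<alpha> + \<beta> *\<^sub>R outer_prod x) = mat (t - \<alpha>) + (- \<beta>) *\<^sub>R outer_prod x"
      by (simp add: mat_def vec_eq_iff)
    then have "poly (charpoly (mat \<alpha> + \<beta> *\<^sub>R outer_prod x)) t
        = det (mat (t - \<alpha>) + (- \<beta>) *\<^sub>R outer_prod x)"
      by (simp only: poly_charpoly)
    then show ?thesis
      using det_mat_plus_outer_prod[of "t - \<alpha>" "- \<beta>" x] by (simp add: poly_power algebra_simps)
  qed
  then show ?thesis
    by (simp add: poly_eq_poly_eq_iff[symmetric] fun_eq_iff)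
qed

lemma proots_charpoly_mat_plus_outer_prod:
  fixes x :: "real^'n"
  shows "proots (charpoly (mat \<alpha> + \<beta> *\<^sub>R outer_prod x))
       = add_mset (\<alpha> + \<beta> * (x \<bullet> x)) (replicate_mset (CARD('n) - 1) \<alpha>)"
  unfolding charpoly_mat_plus_outer_prod
  by (subst proots_mult) (simp_all add: proots_power proots_linear_factor[of "- _", simplified])

lemma ordered_eigenvalues_mat_plus_outer_prod:
  fixes x :: "real^'n"
  assumes "\<beta> * (x \<bullet> x) \<ge> 0"
  shows "ordered_eigenvalues (mat \<alpha> + \<beta> *\<^sub>R outer_prod x)
       = replicate (CARD('n) - 1) \<alpha> @ [\<alpha> + \<beta> * (x \<bullet> x)]"
proof -
  let ?L = "replicate (CARD('n) - 1) \<alpha> @ [\<alpha> + \<beta> * (x \<bullet> x)]"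
  have "sorted ?L" using assms by (auto simp: sorted_append)
  moreover have "mset ?L = proots (charpoly (mat \<alpha> + \<beta> *\<^sub>R outer_prod x))"
    by (simp add: proots_charpoly_mat_plus_outer_prod)
  ultimately show ?thesis
    unfolding ordered_eigenvalues_def by (metis sorted_list_of_multiset_mset sorted_sort_id)
qed

lemma pucci_M01_plus_mat_plus_outer_prod:
  fixes x :: "real^'n"
  assumes "\<alpha> \<ge> 0" "\<alpha> + \<beta> * (x \<bullet> x) \<ge> 0"
  shows "pucci_M01_plus (mat \<alpha> + \<beta> *\<^sub>R outer_prod x) = (\<alpha> + \<beta> * (x \<bullet> x)) + real (CARD('n) - 1) * \<alpha>"
proof -
  let ?E = "ordered_eigenvalues (mat \<alpha> + \<beta> *\<^sub>R outer_prod x)"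
  have E: "mset ?E = add_mset (\<alpha> + \<beta> * (x \<bullet> x)) (replicate_mset (CARD('n) - 1) \<alpha>)"
    by (simp add: ordered_eigenvalues_def proots_charpoly_mat_plus_outer_prod)
  have "\<mu> \<ge> 0" if "\<mu> \<in> set ?E" for \<mu>
  proof -
    have "\<mu> \<in># mset ?E" using that by simp
    then show ?thesis using assms unfolding E by (auto split: if_splits)
  qed
  then have "sum_list (map id (filter (\<lambda>\<mu>. \<mu> > 0) ?E)) = sum_list (map id ?E)"
    by (intro sum_list_map_filter) force
  also have "\<dots> = sum_mset (mset ?E)"
    by (simp add: sum_mset_sum_list)
  finally show ?thesis
    unfolding pucci_M01_plus_def E by simp
qed

lemma pucci_P_plus_mat_plus_outer_prod:
  fixes x :: "real^'n"
  assumes "\<beta> * (x \<bullet> x) \<ge> 0" "1 \<le> k" "k \<le> CARD('n)"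
  shows "pucci_P_plus k (mat \<alpha> + \<beta> *\<^sub>R outer_prod x) = (\<alpha> + \<beta> * (x \<bullet> x)) + real (k - 1) * \<alpha>"
proof -
  have "drop (CARD('n) - k) (replicate (CARD('n) - 1) \<alpha> @ [\<alpha> + \<beta> * (x \<bullet> x)])
      = replicate (k - 1) \<alpha> @ [\<alpha> + \<beta> * (x \<bullet> x)]"
    using assms(2,3) by (simp add: Suc_diff_le)
  then show ?thesis
    by (simp add: pucci_P_plus_def ordered_eigenvalues_mat_plus_outer_prod[OF assms(1)] sum_list_replicate)
qed

section \<open>Radial functions\<close>

locale C2_profile =
  fixes R :: real and \<phi> \<phi>1 \<phi>2 :: "real \<Rightarrow> real"
  assumes R_pos: "R > 0" and C2: "C2_on_interval R \<phi> \<phi>1 \<phi>2"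
begin

lemma phi_deriv_within: "r \<in> {0..<R} \<Longrightarrow> (\<phi> has_real_derivative \<phi>1 r) (at r within {0..<R})"
  and phi1_deriv_within: "r \<in> {0..<R} \<Longrightarrow> (\<phi>1 has_real_derivative \<phi>2 r) (at r within {0..<R})"
  and phi2_cont: "continuous_on {0..<R} \<phi>2"
  using C2 unfolding C2_on_interval_def by auto

lemma phi_cont: "continuous_on {0..<R} \<phi>"
  by (rule DERIV_continuous_on[OF phi_deriv_within])

lemma phi1_cont: "continuous_on {0..<R} \<phi>1"
  by (rule DERIV_continuous_on[OF phi1_deriv_within])

lemma at_within_interval: "r \<in> {0<..<R} \<Longrightarrow> at r within {0..<R} = at r"
  by (rule at_within_interior) auto

lemma
  assumes "r \<in> {0<..<R}"
  shows phi_deriv: "(\<phi> has_real_derivative \<phi>1 r) (at r)"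
    and phi1_deriv: "(\<phi>1 has_real_derivative \<phi>2 r) (at r)"
  using phi_deriv_within[of r] phi1_deriv_within[of r] at_within_interval[OF assms] assms by auto

lemma phi1_quotient_tendsto:
  "((\<lambda>t. (\<phi>1 t - \<phi>1 0) / t) \<longlongrightarrow> \<phi>2 0) (at 0 within {0..<R})"
  using phi1_deriv_within[of 0] R_pos by (simp add: has_field_derivative_iff)

lemma power_times_phi1_deriv:
  assumes "1 \<le> k" and x: "x \<in> {0<..<R}"
  shows "((\<lambda>s. s ^ (k - 1) * \<phi>1 s) has_real_derivative x ^ (k - 1) * (\<phi>2 x + (real k - 1) * (\<phi>1 x / x))) (at x)"
proof -
  have "real (k - 1) * x ^ (k - 1 - 1) * \<phi>1 x = x ^ (k - 1) * ((real k - 1) * (\<phi>1 x / x))"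
  proof (cases "k = 1")
    case False
    then have "\<exists>j. k = Suc (Suc j)" using assms(1) by presburger
    then obtain j where "k = Suc (Suc j)" ..
    then show ?thesis using x by (simp add: field_simps)
  qed simp
  then show ?thesis
    by (auto intro!: derivative_eq_intros phi1_deriv[OF x] simp: algebra_simps)
qed

lemma continuous_on_subinterval:
  "continuous_on {0..<R} h \<Longrightarrow> 0 \<le> s \<Longrightarrow> t < R \<Longrightarrow> continuous_on {s..t} h"
  by (erule continuous_on_subset) auto

end

definition radial_quotient :: "(real \<Rightarrow> real) \<Rightarrow> (real \<Rightarrow> real) \<Rightarrow> real \<Rightarrow> real" where
  "radial_quotient \<phi>1 \<phi>2 r = (if r = 0 then \<phi>2 0 else \<phi>1 r / r)"

definition radial_gradient :: "(real \<Rightarrow> real) \<Rightarrow> (real \<Rightarrow> real) \<Rightarrow> real^'n \<Rightarrow> real^'n" where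
  "radial_gradient \<phi>1 \<phi>2 x = radial_quotient \<phi>1 \<phi>2 (norm x) *\<^sub>R x"

text \<open>\<open>D\<^sup>2\<Phi>(x) = (\<phi>'(r)/r) I + (\<phi>''(r) - \<phi>'(r)/r) x x\<^sup>T / r\<^sup>2\<close> for \<open>r = |x|\<close>; at \<open>x = 0\<close> the
  second term vanishes (as \<open>x/0 = 0\<close> in HOL) and the Hessian is \<open>\<phi>''(0) I\<close>.\<close>
definition radial_hessian :: "(real \<Rightarrow> real) \<Rightarrow> (real \<Rightarrow> real) \<Rightarrow> real^'n \<Rightarrow> real^'n^'n" where
  "radial_hessian \<phi>1 \<phi>2 x = mat (radial_quotient \<phi>1 \<phi>2 (norm x))
     + ((\<phi>2 (norm x) - radial_quotient \<phi>1 \<phi>2 (norm x)) / (norm x)\<^sup>2) *\<^sub>R outer_prod x"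

lemma radial_hessian_eq:
  obtains \<beta> where "radial_hessian \<phi>1 \<phi>2 x = mat (radial_quotient \<phi>1 \<phi>2 (norm x)) + \<beta> *\<^sub>R outer_prod x"
    and "radial_quotient \<phi>1 \<phi>2 (norm x) + \<beta> * (x \<bullet> x) = \<phi>2 (norm x)"
proof (rule that[OF radial_hessian_def])
  show "radial_quotient \<phi>1 \<phi>2 (norm x) + (\<phi>2 (norm x) - radial_quotient \<phi>1 \<phi>2 (norm x)) / (norm x)\<^sup>2 * (x \<bullet> x)
      = \<phi>2 (norm x)"
    by (cases "x = 0") (simp_all add: radial_quotient_def power2_norm_eq_inner[symmetric])
qed

lemma radial_hessian_component:
  "radial_hessian \<phi>1 \<phi>2 y $ i $ j = (if i = j then radial_quotient \<phi>1 \<phi>2 (norm y) else 0)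
     + (\<phi>2 (norm y) - radial_quotient \<phi>1 \<phi>2 (norm y)) / (norm y)\<^sup>2 * (y $ i * y $ j)"
  by (simp add: radial_hessian_def mat_def outer_prod_def)

lemma norm_radial_gradient: "\<phi>1 0 = 0 \<Longrightarrow> norm (radial_gradient \<phi>1 \<phi>2 x) = \<bar>\<phi>1 (norm x)\<bar>"
  by (cases "x = 0") (simp_all add: radial_gradient_def radial_quotient_def abs_divide)

lemma filterlim_norm_at_0:
  "R > 0 \<Longrightarrow> filterlim (norm :: 'a::real_normed_vector \<Rightarrow> real) (at 0 within {0..<R}) (at 0)"
  unfolding filterlim_at
  by (auto simp: eventually_at intro!: exI[of _ R] tendsto_norm_zero tendsto_ident_at)

context C2_profile
begin

lemma radial_quotient_tendsto:
  "\<phi>1 0 = 0 \<Longrightarrow> (radial_quotient \<phi>1 \<phi>2 \<longlongrightarrow> \<phi>2 0) (at 0 within {0..<R})"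
  by (rule Lim_transform_eventually[OF phi1_quotient_tendsto])
    (simp add: eventually_at_filter radial_quotient_def)

lemma radial_quotient_norm_tendsto:
  "\<phi>1 0 = 0 \<Longrightarrow> ((\<lambda>y::'a::real_normed_vector. radial_quotient \<phi>1 \<phi>2 (norm y)) \<longlongrightarrow> \<phi>2 0) (at 0)"
  using filterlim_compose[OF radial_quotient_tendsto filterlim_norm_at_0[OF R_pos]] by blast

lemma phi2_norm_tendsto: "((\<lambda>y::'a::real_normed_vector. \<phi>2 (norm y)) \<longlongrightarrow> \<phi>2 0) (at 0)"
proof -
  have "(\<phi>2 \<longlongrightarrow> \<phi>2 0) (at 0 within {0..<R})"
    using phi2_cont R_pos by (simp add: continuous_on_def)
  from filterlim_compose[OF this filterlim_norm_at_0[OF R_pos]] show ?thesis .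
qed

lemma radial_quotient_deriv:
  assumes r: "r \<in> {0<..<R}"
  shows "DERIV (radial_quotient \<phi>1 \<phi>2) r :> (\<phi>2 r * r - \<phi>1 r) / (r * r)"
proof (rule has_field_derivative_transform_within_open[of "\<lambda>t. \<phi>1 t / t" _ _ "{0<..}"])
  show "DERIV (\<lambda>t. \<phi>1 t / t) r :> (\<phi>2 r * r - \<phi>1 r) / (r * r)"
    using r by (auto intro!: derivative_eq_intros phi1_deriv)
qed (use r in \<open>auto simp: radial_quotient_def\<close>)

lemma has_derivative_phi_norm:
  fixes x :: "real^'n"
  assumes "\<phi>1 0 = 0" and "norm x < R"
  shows "((\<lambda>y. \<phi> (norm y)) has_derivative (\<lambda>h. radial_gradient \<phi>1 \<phi>2 x \<bullet> h)) (at x)"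
proof (cases "x = 0")
  case True
  have "((\<lambda>t. (\<phi> t - \<phi> 0) / t) \<longlongrightarrow> \<phi>1 0) (at 0 within {0..<R})"
    using phi_deriv_within[of 0] R_pos by (simp add: has_field_derivative_iff)
  from filterlim_compose[OF this filterlim_norm_at_0[OF R_pos]]
  have "((\<lambda>y::real^'n. \<bar>(\<phi> (norm y) - \<phi> 0) / norm y\<bar>) \<longlongrightarrow> 0) (at 0)"
    using tendsto_rabs assms(1) by fastforce
  then show ?thesis
    using True by (simp add: has_derivative_iff_norm radial_gradient_def abs_divide)
next
  case False
  then have "norm x \<in> {0<..<R}" using assms by auto
  from has_derivative_compose[OF has_derivative_norm[OF False] phi_deriv[OF this, unfolded has_field_derivative_def]]
  show ?thesis
    using False by (simp add: radial_gradient_def radial_quotient_def sgn_div_norm inner_commute divide_inverse mult.assoc)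
qed

lemma has_derivative_radial_gradient:
  fixes x :: "real^'n"
  assumes phi1_0: "\<phi>1 0 = 0" and x: "norm x < R"
  shows "(radial_gradient \<phi>1 \<phi>2 has_derivative (\<lambda>h. radial_hessian \<phi>1 \<phi>2 x *v h)) (at x)"
proof (cases "x = 0")
  case True
  have hessian_0: "radial_hessian \<phi>1 \<phi>2 0 *v h = \<phi>2 0 *\<^sub>R h" for h :: "real^'n"
    using mat_plus_outer_prod_mult[of "\<phi>2 0" 0 0 h] by (simp add: radial_hessian_def radial_quotient_def)
  have "norm (radial_gradient \<phi>1 \<phi>2 y - radial_gradient \<phi>1 \<phi>2 0 - radial_hessian \<phi>1 \<phi>2 0 *v (y - 0)) / norm (y - 0)
      = \<bar>radial_quotient \<phi>1 \<phi>2 (norm y) - \<phi>2 0\<bar>" for y :: "real^'n"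
    by (cases "y = 0")
      (simp_all add: hessian_0 radial_gradient_def radial_quotient_def scaleR_diff_left[symmetric])
  moreover have "((\<lambda>y::real^'n. \<bar>radial_quotient \<phi>1 \<phi>2 (norm y) - \<phi>2 0\<bar>) \<longlongrightarrow> 0) (at 0)"
    using tendsto_rabs[OF tendsto_diff[OF radial_quotient_norm_tendsto[OF phi1_0] tendsto_const[of "\<phi>2 0"]]] by simp
  ultimately show ?thesis
    using True by (simp add: has_derivative_iff_norm)
next
  case False
  then have r: "norm x \<in> {0<..<R}" using x by auto
  let ?d = "(\<phi>2 (norm x) * norm x - \<phi>1 (norm x)) / (norm x * norm x)"
  have "((\<lambda>y. radial_quotient \<phi>1 \<phi>2 (norm y)) has_derivative (\<lambda>h. ?d * (h \<bullet> sgn x))) (at x)"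
    using has_derivative_compose[OF has_derivative_norm[OF False]
        radial_quotient_deriv[OF r, unfolded has_field_derivative_def]]
    by simp
  from has_derivative_scaleR[OF this has_derivative_ident]
  have "(radial_gradient \<phi>1 \<phi>2 has_derivative
      (\<lambda>h. radial_quotient \<phi>1 \<phi>2 (norm x) *\<^sub>R h + (?d * (h \<bullet> sgn x)) *\<^sub>R x)) (at x)"
    unfolding radial_gradient_def[abs_def] .
  moreover have "?d * (h \<bullet> sgn x) = (\<phi>2 (norm x) - radial_quotient \<phi>1 \<phi>2 (norm x)) / (norm x)\<^sup>2 * (x \<bullet> h)" for h
    using False
    by (simp add: radial_quotient_def sgn_div_norm inner_commute field_simps power2_eq_square)
  ultimately show ?thesis
    by (simp add: radial_hessian_def mat_plus_outer_prod_mult)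
qed

lemma isCont_radial_hessian:
  fixes x :: "real^'n"
  assumes phi1_0: "\<phi>1 0 = 0" and x: "norm x < R"
  shows "isCont (radial_hessian \<phi>1 \<phi>2) x"
  unfolding continuous_at
proof (intro vec_tendstoI)
  fix i j
  show "((\<lambda>y. radial_hessian \<phi>1 \<phi>2 y $ i $ j) \<longlongrightarrow> radial_hessian \<phi>1 \<phi>2 x $ i $ j) (at x)"
  proof (cases "x = 0")
    case False
    then have r: "norm x \<in> {0<..<R}" using x by auto
    have "isCont \<phi>2 (norm x)"
      using phi2_cont r by (metis at_within_interval continuous_on_eq_continuous_within
          greaterThanLessThan_iff atLeastLessThan_iff less_imp_le)
    moreover have "isCont (radial_quotient \<phi>1 \<phi>2) (norm x)"
      using radial_quotient_deriv[OF r] by (rule DERIV_isCont)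
    ultimately have "isCont (\<lambda>y. \<phi>2 (norm y)) x" "isCont (\<lambda>y. radial_quotient \<phi>1 \<phi>2 (norm y)) x"
      by (auto intro: isCont_o2[OF isCont_norm[OF continuous_ident]])
    then have "isCont (\<lambda>y. (if i = j then radial_quotient \<phi>1 \<phi>2 (norm y) else 0)
        + (\<phi>2 (norm y) - radial_quotient \<phi>1 \<phi>2 (norm y)) / (norm y)\<^sup>2 * (y $ i * y $ j)) x"
      using False by (cases "i = j") (auto intro!: continuous_intros)
    then show ?thesis
      by (simp only: radial_hessian_component continuous_at)
  next
    case True
    txt \<open>The rank-one part is bounded by \<open>|\<phi>''(|y|) - \<phi>'(|y|)/|y||\<close>, which tends to \<open>0\<close>.\<close>
    have small: "((\<lambda>y::real^'n. \<bar>\<phi>2 (norm y) - radial_quotient \<phi>1 \<phi>2 (norm y)\<bar>) \<longlongrightarrow> 0) (at 0)"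
      using tendsto_rabs[OF tendsto_diff[OF phi2_norm_tendsto radial_quotient_norm_tendsto[OF phi1_0]]]
      by simp
    have bound: "norm ((\<phi>2 (norm y) - radial_quotient \<phi>1 \<phi>2 (norm y)) / (norm y)\<^sup>2 * (y $ i * y $ j))
        \<le> \<bar>\<phi>2 (norm y) - radial_quotient \<phi>1 \<phi>2 (norm y)\<bar>" for y :: "real^'n"
    proof (cases "y = 0")
      case False
      have "\<bar>y $ i * y $ j\<bar> \<le> (norm y)\<^sup>2"
        unfolding abs_mult power2_eq_square by (intro mult_mono component_le_norm_cart) auto
      then show ?thesis
        using False by (simp add: abs_mult abs_divide divide_le_eq mult_left_mono)
    qed simp
    have "((\<lambda>y::real^'n. (\<phi>2 (norm y) - radial_quotient \<phi>1 \<phi>2 (norm y)) / (norm y)\<^sup>2 * (y $ i * y $ j))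
        \<longlongrightarrow> 0) (at 0)"
      by (rule Lim_null_comparison[OF always_eventually small]) (use bound in blast)
    moreover have "((\<lambda>y::real^'n. if i = j then radial_quotient \<phi>1 \<phi>2 (norm y) else 0)
        \<longlongrightarrow> (if i = j then \<phi>2 0 else 0)) (at 0)"
      by (simp add: radial_quotient_norm_tendsto[OF phi1_0])
    ultimately have "((\<lambda>y. radial_hessian \<phi>1 \<phi>2 y $ i $ j) \<longlongrightarrow> (if i = j then \<phi>2 0 else 0) + 0) (at 0)"
      unfolding radial_hessian_component by (rule tendsto_add[rotated])
    moreover have "radial_hessian \<phi>1 \<phi>2 0 $ i $ j = (if i = j then \<phi>2 0 else 0) + 0"
      by (simp add: radial_hessian_component radial_quotient_def)
    ultimately show ?thesis
      using True by simp
  qed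
qed

lemma C2_on_phi_norm:
  assumes "\<phi>1 0 = 0"
  shows "C2_on (ball (0::real^'n) R) (\<lambda>x. \<phi> (norm x)) (radial_gradient \<phi>1 \<phi>2) (radial_hessian \<phi>1 \<phi>2)"
  unfolding C2_on_def using assms
  by (auto intro!: has_derivative_phi_norm has_derivative_radial_gradient isCont_radial_hessian
      continuous_at_imp_continuous_on)

end

section \<open>The radial Cauchy problem\<close>

lemma first_root_after_pos:
  fixes u :: "real \<Rightarrow> real"
  assumes "continuous_on {a..b} u" "a \<le> b" "u a > 0" "u b \<le> 0"
  obtains c where "a < c" "c \<le> b" "u c = 0" "\<And>t. a \<le> t \<Longrightarrow> t < c \<Longrightarrow> u t > 0"
proof -
  define S where "S = {a..b} \<inter> u -` {..0}"
  have "closed S"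
    unfolding S_def using assms(1) by (rule continuous_closed_preimage) auto
  moreover have "b \<in> S" "bdd_below S"
    using assms by (auto simp: S_def)
  ultimately have "Inf S \<in> S"
    by (intro closed_contains_Inf) auto
  have below: "u t > 0" if "a \<le> t" "t < Inf S" for t
    using that cInf_lower[OF _ \<open>bdd_below S\<close>, of t] \<open>Inf S \<in> S\<close> by (force simp: S_def)
  have "a < Inf S"
    using \<open>Inf S \<in> S\<close> assms(3) by (cases "Inf S = a") (auto simp: S_def)
  obtain z where z: "a \<le> z" "z \<le> Inf S" "u z = 0"
    using IVT2'[of u "Inf S" 0 a] \<open>Inf S \<in> S\<close> assms(1,3)
    by (force simp: S_def intro: continuous_on_subset)
  then have "z = Inf S"
    using below[of z] by fastforce
  show thesis
    by (rule that[of "Inf S"]) (use \<open>a < Inf S\<close> \<open>Inf S \<in> S\<close> z \<open>z = Inf S\<close> below in \<open>auto simp: S_def\<close>)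
qed

lemma last_root_before_neg:
  fixes u :: "real \<Rightarrow> real"
  assumes "continuous_on {a..b} u" "a \<le> b" "u a \<ge> 0" "u b < 0"
  obtains c where "a \<le> c" "c < b" "u c = 0" "\<And>t. c < t \<Longrightarrow> t \<le> b \<Longrightarrow> u t < 0"
proof -
  have "continuous_on {-b..-a} (\<lambda>t. - u (- t))"
    by (intro continuous_intros continuous_on_compose2[OF assms(1)]) auto
  then obtain c where c: "-b < c" "c \<le> -a" "u (-c) = 0" "\<And>t. -b \<le> t \<Longrightarrow> t < c \<Longrightarrow> u (-t) < 0"
    by (rule first_root_after_pos) (use assms in auto)
  show thesis
  proof (rule that[of "-c"])
    show "u t < 0" if "-c < t" "t \<le> b" for t
      using c(4)[of "-t"] that by simp
  qed (use c in auto)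
qed

locale radial_cauchy = C2_profile +
  fixes m :: real and f g :: "real \<Rightarrow> real" and q a :: real
  assumes solution: "radial_cauchy_solution m f g q a R \<phi> \<phi>1 \<phi>2"
    and m_ge_1: "m \<ge> 1" and q_pos: "q > 0"
    and f_cont: "continuous_on UNIV f" and f_mono: "mono f" and f_pos: "\<And>t. f t > 0"
    and g_cont: "continuous_on UNIV g" and g_mono: "mono g"
begin

lemma phi_0: "\<phi> 0 = a"
  and phi1_0: "\<phi>1 0 = 0"
  and ode: "r \<in> {0<..<R} \<Longrightarrow> \<phi>2 r + (m - 1) / r * \<phi>1 r = f (\<phi> r) + g (\<phi> r) * \<bar>\<phi>1 r\<bar> powr q"
  using solution unfolding radial_cauchy_solution_def by auto

text \<open>Let \<open>r \<rightarrow> 0\<close> in the ODE, using \<open>\<phi>'(r)/r \<rightarrow> \<phi>''(0)\<close>.\<close>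
lemma m_phi2_0: "m * \<phi>2 0 = f a"
proof -
  let ?F = "at (0::real) within {0<..<R}"
  have "?F \<noteq> bot"
    using R_pos by (simp add: trivial_limit_within islimpt_greaterThanLessThan1)
  have restrict: "(h \<longlongrightarrow> l) (at 0 within {0..<R}) \<Longrightarrow> (h \<longlongrightarrow> l) ?F" for h :: "real \<Rightarrow> real" and l
    by (erule tendsto_within_subset) auto
  have "(\<phi> \<longlongrightarrow> \<phi> 0) ?F" "(\<phi>1 \<longlongrightarrow> \<phi>1 0) ?F" "(\<phi>2 \<longlongrightarrow> \<phi>2 0) ?F"
    using R_pos phi_cont phi1_cont phi2_cont by (auto intro!: restrict simp: continuous_on_def)
  then have lim: "(\<phi> \<longlongrightarrow> a) ?F" "(\<phi>1 \<longlongrightarrow> 0) ?F" "(\<phi>2 \<longlongrightarrow> \<phi>2 0) ?F"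
    by (simp_all add: phi_0 phi1_0)
  have "((\<lambda>r. \<phi>1 r / r) \<longlongrightarrow> \<phi>2 0) ?F"
    using restrict[OF phi1_quotient_tendsto] by (simp add: phi1_0)
  then have lhs: "((\<lambda>r. \<phi>2 r + (m - 1) * (\<phi>1 r / r)) \<longlongrightarrow> \<phi>2 0 + (m - 1) * \<phi>2 0) ?F"
    by (intro tendsto_add tendsto_mult tendsto_const lim)
  have rhs: "((\<lambda>r. f (\<phi> r) + g (\<phi> r) * \<bar>\<phi>1 r\<bar> powr q) \<longlongrightarrow> f a + g a * \<bar>0\<bar> powr q) ?F"
  proof (intro tendsto_add tendsto_mult)
    show "((\<lambda>r. f (\<phi> r)) \<longlongrightarrow> f a) ?F" "((\<lambda>r. g (\<phi> r)) \<longlongrightarrow> g a) ?F"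
      using f_cont g_cont lim(1) by (auto intro: continuous_on_tendsto_compose[where s = UNIV])
    show "((\<lambda>r. \<bar>\<phi>1 r\<bar> powr q) \<longlongrightarrow> \<bar>0\<bar> powr q) ?F"
      using q_pos by (intro tendsto_powr' tendsto_rabs lim(2) tendsto_const) auto
  qed
  have "\<forall>\<^sub>F r in ?F. \<phi>2 r + (m - 1) * (\<phi>1 r / r) = f (\<phi> r) + g (\<phi> r) * \<bar>\<phi>1 r\<bar> powr q"
    using ode by (auto simp: eventually_at_filter)
  from tendsto_unique[OF \<open>?F \<noteq> bot\<close> Lim_transform_eventually[OF lhs this] rhs]
  have "\<phi>2 0 + (m - 1) * \<phi>2 0 = f a + g a * \<bar>0\<bar> powr q" .
  then show ?thesis by (simp add: algebra_simps)
qed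

lemma phi2_0_pos: "\<phi>2 0 > 0"
  using m_phi2_0 f_pos[of a] m_ge_1 by (metis less_le_trans zero_less_mult_pos zero_less_one)

lemma phi1_pos:
  assumes r: "r \<in> {0<..<R}"
  shows "\<phi>1 r > 0"
proof (rule ccontr)
  assume "\<not> \<phi>1 r > 0"
  have "\<forall>\<^sub>F t in at 0 within {0..<R}. \<phi>1 t / t > 0"
    using order_tendstoD(1)[OF phi1_quotient_tendsto phi2_0_pos] by (simp add: phi1_0)
  then obtain d where "d > 0" and d: "\<And>t. t \<in> {0..<R} \<Longrightarrow> t \<noteq> 0 \<Longrightarrow> dist t 0 < d \<Longrightarrow> \<phi>1 t / t > 0"
    unfolding eventually_at by blast
  define s where "s = min (d / 2) (r / 2)"
  have s: "0 < s" "s < r" "s < d"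
    using \<open>d > 0\<close> r by (auto simp: s_def)
  then have "\<phi>1 s > 0"
    using d[of s] r by (auto simp: zero_less_divide_iff)
  obtain c where c: "s < c" "c \<le> r" "\<phi>1 c = 0" and before: "\<And>t. s \<le> t \<Longrightarrow> t < c \<Longrightarrow> \<phi>1 t > 0"
  proof (rule first_root_after_pos[of s r \<phi>1])
    show "continuous_on {s..r} \<phi>1"
      using s r by (intro continuous_on_subinterval[OF phi1_cont]) auto
  qed (use s \<open>\<phi>1 s > 0\<close> \<open>\<not> \<phi>1 r > 0\<close> in auto)
  have cR: "c \<in> {0<..<R}" using c s r by auto
  txt \<open>At a first zero \<open>c\<close> of \<open>\<phi>'\<close> the equation forces \<open>\<phi>''(c) = f(\<phi>(c)) > 0\<close>,
    so \<open>\<phi>'\<close> would be negative just before \<open>c\<close>.\<close>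
  have "\<phi>2 c > 0"
    using ode[OF cR] c(3) q_pos f_pos by simp
  then obtain e where "e > 0" and e: "\<And>h. 0 < h \<Longrightarrow> h < e \<Longrightarrow> \<phi>1 (c - h) < \<phi>1 c"
    using DERIV_pos_inc_left[OF phi1_deriv[OF cR]] by blast
  define h where "h = min (e / 2) (c - s)"
  have "0 < h" "h < e" "h \<le> c - s" using \<open>e > 0\<close> c by (auto simp: h_def)
  then show False
    using e[of h] before[of "c - h"] c(3) by auto
qed

lemma phi2_eq:
  "r \<in> {0<..<R} \<Longrightarrow> \<phi>2 r = f (\<phi> r) + g (\<phi> r) * \<phi>1 r powr q - (m - 1) * (\<phi>1 r / r)"
  using ode[of r] phi1_pos[of r] by (simp add: algebra_simps)

lemma phi1_nonneg: "r \<in> {0..<R} \<Longrightarrow> \<phi>1 r \<ge> 0"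
  using phi1_pos[of r] phi1_0 by (cases "r = 0") auto

lemma phi_mono:
  assumes "0 \<le> s" "s \<le> r" "r < R"
  shows "\<phi> s \<le> \<phi> r"
proof (rule DERIV_nonneg_imp_increasing_open[of s r])
  show "continuous_on {s..r} \<phi>"
    using assms by (intro continuous_on_subinterval[OF phi_cont])
  fix x assume "s < x" "x < r"
  then show "\<exists>y. DERIV \<phi> x :> y \<and> y \<ge> 0"
    using assms by (intro exI[of _ "\<phi>1 x"] conjI phi_deriv less_imp_le[OF phi1_pos]) auto
qed (use assms in simp)

lemma phi2_increment_ge:
  assumes "0 < r0" "r0 \<le> r" "r < R"
  shows "\<phi>2 r - \<phi>2 r0 \<ge> g (\<phi> r0) * (\<phi>1 r powr q - \<phi>1 r0 powr q) - (m - 1) * (\<phi>1 r / r - \<phi>1 r0 / r0)"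
proof -
  have "\<phi> r0 \<le> \<phi> r" using phi_mono assms by simp
  then have f_le: "f (\<phi> r0) \<le> f (\<phi> r)" and g_le: "g (\<phi> r0) \<le> g (\<phi> r)"
    using f_mono g_mono by (simp_all add: monoD)
  have "g (\<phi> r0) * \<phi>1 r powr q \<le> g (\<phi> r) * \<phi>1 r powr q"
    by (rule mult_right_mono[OF g_le powr_ge_zero])
  moreover have "r \<in> {0<..<R}" "r0 \<in> {0<..<R}" using assms by auto
  ultimately show ?thesis
    using phi2_eq f_le right_diff_distrib[of "g (\<phi> r0)"] right_diff_distrib[of "m - 1"] by fastforce
qed

lemma phi2_nonneg:
  assumes r1: "r1 \<in> {0..<R}"
  shows "\<phi>2 r1 \<ge> 0"
proof (rule ccontr)
  assume "\<not> \<phi>2 r1 \<ge> 0"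
  obtain r0 where r0: "0 \<le> r0" "r0 < r1" "\<phi>2 r0 = 0" and after: "\<And>t. r0 < t \<Longrightarrow> t \<le> r1 \<Longrightarrow> \<phi>2 t < 0"
  proof (rule last_root_before_neg[of 0 r1 \<phi>2])
    show "continuous_on {0..r1} \<phi>2"
      using r1 by (intro continuous_on_subinterval[OF phi2_cont]) auto
  qed (use r1 phi2_0_pos \<open>\<not> \<phi>2 r1 \<ge> 0\<close> in auto)
  have "r0 > 0" using r0 phi2_0_pos by (cases "r0 = 0") auto
  define \<Psi> where "\<Psi> s = g (\<phi> r0) * \<phi>1 s powr q - (m - 1) * (\<phi>1 s / s)" for s
  txt \<open>Since \<open>\<phi>'' < 0\<close> on \<open>(r0, r1]\<close>, \<open>\<Psi>\<close> must stay below \<open>\<Psi>(r0)\<close> there.\<close>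
  have below: "\<Psi> r - \<Psi> r0 < 0" if "r0 < r" "r \<le> r1" for r
    using phi2_increment_ge[of r0 r] after[OF that] r0 \<open>r0 > 0\<close> that r1
    by (simp add: \<Psi>_def algebra_simps)
  show False
  proof (cases "m = 1")
    case True
    txt \<open>Then \<open>\<Psi> = g(\<phi>(r0)) \<phi>'^q\<close> with \<open>g(\<phi>(r0)) < 0\<close>, while \<open>\<phi>'\<close> decreases on \<open>[r0, r1]\<close>.\<close>
    have "0 = f (\<phi> r0) + g (\<phi> r0) * \<phi>1 r0 powr q"
      using phi2_eq[of r0] r0 \<open>r0 > 0\<close> r1 True by simp
    then have "g (\<phi> r0) < 0"
      using f_pos[of "\<phi> r0"] by (smt (verit) powr_ge_zero zero_le_mult_iff)
    moreover have "\<phi>1 r1 \<le> \<phi>1 r0"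
    proof (rule DERIV_nonpos_imp_decreasing_open[of r0 r1])
      show "continuous_on {r0..r1} \<phi>1"
        using r0 r1 by (intro continuous_on_subinterval[OF phi1_cont]) auto
      fix x assume "r0 < x" "x < r1"
      then show "\<exists>y. DERIV \<phi>1 x :> y \<and> y \<le> 0"
        using r0 r1 by (intro exI[of _ "\<phi>2 x"] conjI phi1_deriv less_imp_le[OF after]) auto
    qed (use r0 in simp)
    then have "\<phi>1 r1 powr q \<le> \<phi>1 r0 powr q"
      using phi1_pos[of r1] r0 r1 q_pos by (intro powr_mono2) auto
    ultimately have "\<Psi> r1 - \<Psi> r0 \<ge> 0"
      using True by (simp add: \<Psi>_def right_diff_distrib[symmetric] mult_nonpos_nonpos)
    then show False using below[of r1] r0 by simp
  next
    case False
    txt \<open>Since \<open>\<phi>''(r0) = 0\<close>, only the singular term contributes to \<open>\<Psi>'(r0) > 0\<close>.\<close>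
    have r0R: "r0 \<in> {0<..<R}" using \<open>r0 > 0\<close> r0 r1 by auto
    have "DERIV \<Psi> r0 :> g (\<phi> r0) * (q * \<phi>1 r0 powr (q - 1) * \<phi>2 r0)
        - (m - 1) * ((\<phi>2 r0 * r0 - \<phi>1 r0 * 1) / (r0 * r0))"
      unfolding \<Psi>_def using phi1_pos[OF r0R] \<open>r0 > 0\<close>
      by (auto intro!: derivative_eq_intros phi1_deriv[OF r0R] simp: algebra_simps)
    then have "DERIV \<Psi> r0 :> (m - 1) * (\<phi>1 r0 / (r0 * r0))"
      using r0(3) by simp
    moreover have "(m - 1) * (\<phi>1 r0 / (r0 * r0)) > 0"
      using False m_ge_1 phi1_pos[OF r0R] \<open>r0 > 0\<close> by simp
    ultimately obtain e where "e > 0" and e: "\<And>h. 0 < h \<Longrightarrow> h < e \<Longrightarrow> \<Psi> r0 < \<Psi> (r0 + h)"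
      by (metis DERIV_pos_inc_right)
    define h where "h = min (e / 2) (r1 - r0)"
    have "0 < h" "h < e" "h \<le> r1 - r0" using \<open>e > 0\<close> r0 by (auto simp: h_def)
    then have "\<Psi> r0 < \<Psi> (r0 + h)" "\<Psi> (r0 + h) - \<Psi> r0 < 0"
      using e[of h] below[of "r0 + h"] by auto
    then show False by simp
  qed
qed

lemma phi1_mono:
  assumes "0 \<le> s" "s \<le> r" "r < R"
  shows "\<phi>1 s \<le> \<phi>1 r"
proof (rule DERIV_nonneg_imp_increasing_open[of s r])
  show "continuous_on {s..r} \<phi>1"
    using assms by (intro continuous_on_subinterval[OF phi1_cont])
  fix x assume "s < x" "x < r"
  then show "\<exists>y. DERIV \<phi>1 x :> y \<and> y \<ge> 0"
    using assms by (intro exI[of _ "\<phi>2 x"] conjI phi1_deriv phi2_nonneg) auto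
qed (use assms in simp)

lemma ode_rhs_mono:
  assumes "\<And>t. g t \<ge> 0" and "0 \<le> s" "s \<le> r" "r < R"
  shows "f (\<phi> s) + g (\<phi> s) * \<phi>1 s powr q \<le> f (\<phi> r) + g (\<phi> r) * \<phi>1 r powr q"
proof -
  have "\<phi>1 s powr q \<le> \<phi>1 r powr q"
    using phi1_mono phi1_nonneg assms q_pos by (intro powr_mono2) auto
  moreover have "f (\<phi> s) \<le> f (\<phi> r)" "g (\<phi> s) \<le> g (\<phi> r)"
    using phi_mono assms f_mono g_mono by (simp_all add: monoD)
  ultimately show ?thesis
    using assms(1) by (smt (verit) mult_mono powr_ge_zero)
qed

lemma quotient_le_phi2:
  assumes k: "m = real k" and g_nonneg: "\<And>t. g t \<ge> 0" and r: "r \<in> {0<..<R}"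
  shows "\<phi>1 r / r \<le> \<phi>2 r"
proof -
  define h where "h s = f (\<phi> s) + g (\<phi> s) * \<phi>1 s powr q" for s
  have k1: "k \<ge> 1" using k m_ge_1 by simp
  have ode_h: "\<phi>2 s + (m - 1) * (\<phi>1 s / s) = h s" if "s \<in> {0<..<R}" for s
    using phi2_eq[OF that] by (simp add: h_def)
  have h_le: "h s \<le> h r" if "0 \<le> s" "s \<le> r" for s
    unfolding h_def using ode_rhs_mono[OF g_nonneg] that r by simp
  txt \<open>Integrate \<open>(s^(k-1) \<phi>'(s))' = s^(k-1) h(s) \<le> s^(k-1) h(r)\<close> over \<open>[0, r]\<close>.\<close>
  define F where "F s = s ^ (k - 1) * \<phi>1 s - h r * s ^ k / real k" for s
  have "F r \<le> F 0"
  proof (rule DERIV_nonpos_imp_decreasing_open[of 0 r F])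
    show "continuous_on {0..r} F"
      unfolding F_def using r k1 by (intro continuous_intros continuous_on_subinterval[OF phi1_cont]) auto
    fix x assume x: "0 < x" "x < r"
    then have xR: "x \<in> {0<..<R}" using r by auto
    have "DERIV F x :> x ^ (k - 1) * (\<phi>2 x + (real k - 1) * (\<phi>1 x / x)) - h r * (real k * x ^ (k - 1)) / real k"
      unfolding F_def
      by (rule DERIV_diff[OF power_times_phi1_deriv[OF k1 xR]]) (auto intro!: derivative_eq_intros)
    moreover have "x ^ (k - 1) * (\<phi>2 x + (real k - 1) * (\<phi>1 x / x)) - h r * (real k * x ^ (k - 1)) / real k
        = x ^ (k - 1) * (h x - h r)"
      using ode_h[OF xR] k k1 by (simp add: right_diff_distrib)
    ultimately show "\<exists>y. DERIV F x :> y \<and> y \<le> 0"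
      using h_le[of x] x by (intro exI conjI) (auto simp: mult_nonneg_nonpos)
  qed (use r in simp)
  then have "r ^ (k - 1) * \<phi>1 r \<le> r ^ (k - 1) * (h r * r / m)"
    using k k1 r phi1_0 by (simp add: F_def power_eq_if[of r k] power_eq_if[of 0 k] mult_ac)
  then have "\<phi>1 r \<le> h r * r / m"
    by (rule mult_left_le_imp_le) (use r in simp)
  then have "m * (\<phi>1 r / r) \<le> h r"
    using r k k1 by (simp add: field_simps)
  then show ?thesis
    using ode_h[OF r] left_diff_distrib[of m 1 "\<phi>1 r / r"] by linarith
qed

lemma radial_quotient_nonneg: "0 \<le> r \<Longrightarrow> r < R \<Longrightarrow> radial_quotient \<phi>1 \<phi>2 r \<ge> 0"
  using phi2_0_pos phi1_pos[of r] by (auto simp: radial_quotient_def)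

lemma radial_equation:
  fixes x :: "real^'n"
  assumes "norm x < R"
  shows "\<phi>2 (norm x) + (m - 1) * radial_quotient \<phi>1 \<phi>2 (norm x)
       = f (\<phi> (norm x)) + g (\<phi> (norm x)) * norm (radial_gradient \<phi>1 \<phi>2 x) powr q"
proof (cases "x = 0")
  case True
  then show ?thesis
    using m_phi2_0 by (simp add: radial_quotient_def radial_gradient_def phi_0 algebra_simps)
next
  case False
  then show ?thesis
    using ode[of "norm x"] assms by (simp add: radial_quotient_def norm_radial_gradient[of \<phi>1, OF phi1_0])
qed

lemma pucci_M01_plus_radial_hessian:
  fixes x :: "real^'n"
  assumes "m = real CARD('n)" and "norm x < R"
  shows "pucci_M01_plus (radial_hessian \<phi>1 \<phi>2 x)
       = f (\<phi> (norm x)) + g (\<phi> (norm x)) * norm (radial_gradient \<phi>1 \<phi>2 x) powr q"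
proof -
  obtain \<beta> where H: "radial_hessian \<phi>1 \<phi>2 x = mat (radial_quotient \<phi>1 \<phi>2 (norm x)) + \<beta> *\<^sub>R outer_prod x"
    and eig: "radial_quotient \<phi>1 \<phi>2 (norm x) + \<beta> * (x \<bullet> x) = \<phi>2 (norm x)"
    by (rule radial_hessian_eq)
  have "radial_quotient \<phi>1 \<phi>2 (norm x) \<ge> 0" "radial_quotient \<phi>1 \<phi>2 (norm x) + \<beta> * (x \<bullet> x) \<ge> 0"
    using radial_quotient_nonneg phi2_nonneg assms(2) eig by auto
  from pucci_M01_plus_mat_plus_outer_prod[OF this]
  have "pucci_M01_plus (radial_hessian \<phi>1 \<phi>2 x) = \<phi>2 (norm x) + (m - 1) * radial_quotient \<phi>1 \<phi>2 (norm x)"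
    unfolding H eig using assms(1) by (simp add: of_nat_diff)
  then show ?thesis
    using radial_equation[OF assms(2)] by simp
qed

lemma pucci_P_plus_radial_hessian:
  fixes x :: "real^'n"
  assumes "m = real k" and "k \<le> CARD('n)" and "\<And>t. g t \<ge> 0" and "norm x < R"
  shows "pucci_P_plus k (radial_hessian \<phi>1 \<phi>2 x)
       = f (\<phi> (norm x)) + g (\<phi> (norm x)) * norm (radial_gradient \<phi>1 \<phi>2 x) powr q"
proof -
  obtain \<beta> where H: "radial_hessian \<phi>1 \<phi>2 x = mat (radial_quotient \<phi>1 \<phi>2 (norm x)) + \<beta> *\<^sub>R outer_prod x"
    and eig: "radial_quotient \<phi>1 \<phi>2 (norm x) + \<beta> * (x \<bullet> x) = \<phi>2 (norm x)"
    by (rule radial_hessian_eq)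
  have "radial_quotient \<phi>1 \<phi>2 (norm x) \<le> \<phi>2 (norm x)"
    using quotient_le_phi2[OF assms(1,3)] assms(4) by (simp add: radial_quotient_def)
  then have "\<beta> * (x \<bullet> x) \<ge> 0" using eig by simp
  moreover have "1 \<le> k" using assms(1) m_ge_1 by simp
  ultimately have "pucci_P_plus k (radial_hessian \<phi>1 \<phi>2 x) = \<phi>2 (norm x) + (m - 1) * radial_quotient \<phi>1 \<phi>2 (norm x)"
    unfolding H using pucci_P_plus_mat_plus_outer_prod[of \<beta> x k, OF _ _ assms(2)] assms(1) eig
    by (simp add: of_nat_diff)
  then show ?thesis
    using radial_equation[OF assms(4)] by simp
qed

end

theorem lemma3p1:
  fixes f g :: "real \<Rightarrow> real" and q a R :: real
    and \<phi> \<phi>1 \<phi>2 :: "real \<Rightarrow> real"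
  assumes "R > 0" and "q > 0"
    and "continuous_on UNIV f" and "mono f" and "\<forall>t. f t > 0"
    and "continuous_on UNIV g" and "mono g"
  shows
    "(C2_on_interval R \<phi> \<phi>1 \<phi>2 \<and>
      radial_cauchy_solution (real CARD('n)) f g q a R \<phi> \<phi>1 \<phi>2 \<longrightarrow>
      (\<exists>D H. C2_on (ball (0::real^'n) R) (\<lambda>x. \<phi> (norm x)) D H \<and>
        (\<forall>x\<in>ball 0 R. pucci_M01_plus (H x) =
            f (\<phi> (norm x)) + g (\<phi> (norm x)) * norm (D x) powr q)))
   \<and>
    (\<forall>k::nat. 1 \<le> k \<and> k \<le> CARD('n) \<and> (\<forall>t. g t \<ge> 0) \<and>
      C2_on_interval R \<phi> \<phi>1 \<phi>2 \<and>
      radial_cauchy_solution (real k) f g q a R \<phi> \<phi>1 \<phi>2 \<longrightarrow>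
      (\<exists>D H. C2_on (ball (0::real^'n) R) (\<lambda>x. \<phi> (norm x)) D H \<and>
        (\<forall>x\<in>ball 0 R. pucci_P_plus k (H x) =
            f (\<phi> (norm x)) + g (\<phi> (norm x)) * norm (D x) powr q)))"
proof (intro conjI impI allI)
  assume "C2_on_interval R \<phi> \<phi>1 \<phi>2 \<and> radial_cauchy_solution (real CARD('n)) f g q a R \<phi> \<phi>1 \<phi>2"
  then interpret radial_cauchy R \<phi> \<phi>1 \<phi>2 "real CARD('n)" f g q a
    using assms by unfold_locales auto
  show "\<exists>D H. C2_on (ball (0::real^'n) R) (\<lambda>x. \<phi> (norm x)) D H \<and>
      (\<forall>x\<in>ball 0 R. pucci_M01_plus (H x) = f (\<phi> (norm x)) + g (\<phi> (norm x)) * norm (D x) powr q)"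
  proof (intro exI conjI ballI)
    show "C2_on (ball 0 R) (\<lambda>x. \<phi> (norm x)) (radial_gradient \<phi>1 \<phi>2) (radial_hessian \<phi>1 \<phi>2)"
      by (rule C2_on_phi_norm[OF phi1_0])
  qed (simp add: pucci_M01_plus_radial_hessian)
next
  fix k :: nat
  assume k: "1 \<le> k \<and> k \<le> CARD('n) \<and> (\<forall>t. g t \<ge> 0) \<and> C2_on_interval R \<phi> \<phi>1 \<phi>2 \<and>
    radial_cauchy_solution (real k) f g q a R \<phi> \<phi>1 \<phi>2"
  then interpret radial_cauchy R \<phi> \<phi>1 \<phi>2 "real k" f g q a
    using assms by unfold_locales auto
  show "\<exists>D H. C2_on (ball (0::real^'n) R) (\<lambda>x. \<phi> (norm x)) D H \<and>
      (\<forall>x\<in>ball 0 R. pucci_P_plus k (H x) = f (\<phi> (norm x)) + g (\<phi> (norm x)) * norm (D x) powr q)"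
  proof (intro exI conjI ballI)
    show "C2_on (ball 0 R) (\<lambda>x. \<phi> (norm x)) (radial_gradient \<phi>1 \<phi>2) (radial_hessian \<phi>1 \<phi>2)"
      by (rule C2_on_phi_norm[OF phi1_0])
  qed (use k in \<open>simp add: pucci_P_plus_radial_hessian\<close>)
qed

end
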